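(* Let $(X_1,\dots,X_n)$, $2\le n\le\infty$, be a random vector or sequence such that for each $l=2,\dots,n$ the vector $(X_1,\dots,X_l)$ is RE$(l)$. Then $(X_1,\dots,X_n)$ is SIAMX* and SIAMN*. Moreover, it is SSIAMX* if $\Pr[X_l>\max(|X_1|,\dots,|X_{l-1}|)]>0$ for $l=3,\dots,n$, and it is SSIAMN* if $\Pr[X_l<-\max(|X_1|,\dots,|X_{l-1}|)]>0$ for $l=3,\dots,n$.
   Context: A random vector $(Y_1,\dots,Y_l)$ is RE$(k,l)$ for $1\le k<l$ if its distribution is unchanged when $(Y_k,Y_l)$ is replaced by $(-Y_l,-Y_k)$ (other coordinates fixed); it is RE$(l)$ if it is RE$(k,l)$ for some $k<l$. For random variables $U,V$, $U\le_{\mathrm{st}}V$ means $F_U(x)\ge F_V(x)$ for all $x$ ($F$ the cdf), and $U<_{\mathrm{st}}V$ means additionally strict inequality for at least one $x$. $(X_1,\dots,X_n)$ is SIAMX* if $|X_1|\overset{d}{=}|\max(X_1,X_2)|$ and $|\max(X_1,\dots,X_{l-1})|\le_{\mathrm{st}}|\max(X_1,\dots,X_l)|$ for $l=3,\dots,n$; SSIAMX* if moreover these last inequalities are strict ($<_{\mathrm{st}}$). SIAMN* and SSIAMN* are defined the same way with $\max$ replaced by $\min$ (including $|X_1|\overset{d}{=}|\min(X_1,X_2)|$). *)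

theory Defs
  imports "HOL-Probability.Probability"
begin

text \<open>Random vectors/sequences are indexed from 1: X 1, X 2, ... ; the length n is an
  extended natural number (n = \<infinity> for a sequence).\<close>

definition prefix_law :: "'a measure \<Rightarrow> (nat \<Rightarrow> 'a \<Rightarrow> real) \<Rightarrow> nat \<Rightarrow> (nat \<Rightarrow> real) measure" where
  "prefix_law M Y l = distr M (PiM {1..l} (\<lambda>_. borel)) (\<lambda>\<omega>. \<lambda>i\<in>{1..l}. Y i \<omega>)"

definition RE_kl :: "'a measure \<Rightarrow> (nat \<Rightarrow> 'a \<Rightarrow> real) \<Rightarrow> nat \<Rightarrow> nat \<Rightarrow> bool" where
  "RE_kl M Y k l \<longleftrightarrow> 1 \<le> k \<and> k < l \<and>
     prefix_law M Y l =
     prefix_law M (\<lambda>i \<omega>. if i = k then - Y l \<omega> else if i = l then - Y k \<omega> else Y i \<omega>) l"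

definition RE :: "'a measure \<Rightarrow> (nat \<Rightarrow> 'a \<Rightarrow> real) \<Rightarrow> nat \<Rightarrow> bool" where
  "RE M Y l \<longleftrightarrow> (\<exists>k. 1 \<le> k \<and> k < l \<and> RE_kl M Y k l)"

definition cdf_rv :: "'a measure \<Rightarrow> ('a \<Rightarrow> real) \<Rightarrow> real \<Rightarrow> real" where
  "cdf_rv M U x = measure M {\<omega> \<in> space M. U \<omega> \<le> x}"

definition st_le :: "'a measure \<Rightarrow> ('a \<Rightarrow> real) \<Rightarrow> ('a \<Rightarrow> real) \<Rightarrow> bool" where
  "st_le M U V \<longleftrightarrow> (\<forall>x. cdf_rv M U x \<ge> cdf_rv M V x)"

definition st_less :: "'a measure \<Rightarrow> ('a \<Rightarrow> real) \<Rightarrow> ('a \<Rightarrow> real) \<Rightarrow> bool" where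
  "st_less M U V \<longleftrightarrow> st_le M U V \<and> (\<exists>x. cdf_rv M U x > cdf_rv M V x)"

definition eq_dist :: "'a measure \<Rightarrow> ('a \<Rightarrow> real) \<Rightarrow> ('a \<Rightarrow> real) \<Rightarrow> bool" where
  "eq_dist M U V \<longleftrightarrow> distr M borel U = distr M borel V"

definition maxX :: "(nat \<Rightarrow> 'a \<Rightarrow> real) \<Rightarrow> nat \<Rightarrow> 'a \<Rightarrow> real" where
  "maxX X l \<omega> = Max ((\<lambda>i. X i \<omega>) ` {1..l})"

definition minX :: "(nat \<Rightarrow> 'a \<Rightarrow> real) \<Rightarrow> nat \<Rightarrow> 'a \<Rightarrow> real" where
  "minX X l \<omega> = Min ((\<lambda>i. X i \<omega>) ` {1..l})"

definition SIAMX :: "'a measure \<Rightarrow> (nat \<Rightarrow> 'a \<Rightarrow> real) \<Rightarrow> enat \<Rightarrow> bool" where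
  "SIAMX M X n \<longleftrightarrow> eq_dist M (\<lambda>\<omega>. \<bar>X 1 \<omega>\<bar>) (\<lambda>\<omega>. \<bar>maxX X 2 \<omega>\<bar>) \<and>
     (\<forall>l. 3 \<le> l \<and> enat l \<le> n \<longrightarrow> st_le M (\<lambda>\<omega>. \<bar>maxX X (l - 1) \<omega>\<bar>) (\<lambda>\<omega>. \<bar>maxX X l \<omega>\<bar>))"

definition SSIAMX :: "'a measure \<Rightarrow> (nat \<Rightarrow> 'a \<Rightarrow> real) \<Rightarrow> enat \<Rightarrow> bool" where
  "SSIAMX M X n \<longleftrightarrow> eq_dist M (\<lambda>\<omega>. \<bar>X 1 \<omega>\<bar>) (\<lambda>\<omega>. \<bar>maxX X 2 \<omega>\<bar>) \<and>
     (\<forall>l. 3 \<le> l \<and> enat l \<le> n \<longrightarrow> st_less M (\<lambda>\<omega>. \<bar>maxX X (l - 1) \<omega>\<bar>) (\<lambda>\<omega>. \<bar>maxX X l \<omega>\<bar>))"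

definition SIAMN :: "'a measure \<Rightarrow> (nat \<Rightarrow> 'a \<Rightarrow> real) \<Rightarrow> enat \<Rightarrow> bool" where
  "SIAMN M X n \<longleftrightarrow> eq_dist M (\<lambda>\<omega>. \<bar>X 1 \<omega>\<bar>) (\<lambda>\<omega>. \<bar>minX X 2 \<omega>\<bar>) \<and>
     (\<forall>l. 3 \<le> l \<and> enat l \<le> n \<longrightarrow> st_le M (\<lambda>\<omega>. \<bar>minX X (l - 1) \<omega>\<bar>) (\<lambda>\<omega>. \<bar>minX X l \<omega>\<bar>))"

definition SSIAMN :: "'a measure \<Rightarrow> (nat \<Rightarrow> 'a \<Rightarrow> real) \<Rightarrow> enat \<Rightarrow> bool" where
  "SSIAMN M X n \<longleftrightarrow> eq_dist M (\<lambda>\<omega>. \<bar>X 1 \<omega>\<bar>) (\<lambda>\<omega>. \<bar>minX X 2 \<omega>\<bar>) \<and>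
     (\<forall>l. 3 \<le> l \<and> enat l \<le> n \<longrightarrow> st_less M (\<lambda>\<omega>. \<bar>minX X (l - 1) \<omega>\<bar>) (\<lambda>\<omega>. \<bar>minX X l \<omega>\<bar>))"

end

theory Submission
  imports Defs
begin

text \<open>
  Fix \<open>t \<ge> 0\<close> and let \<open>A(l)\<close> be the event \<open>\<bar>max(X 1, ..., X l)\<bar> \<le> t\<close>. The event
  \<open>A(l) - A(l-1)\<close> says that \<open>X 1, ..., X (l-1) < -t\<close> and \<open>\<bar>X l\<bar> \<le> t\<close>; the reflection
  \<open>(X k, X l) \<mapsto> (-X l, -X k)\<close> granted by RE(k,l) carries it to an event of the same probability
  inside \<open>A(l-1) - A(l)\<close>. Hence \<open>P(A(l)) \<le> P(A(l-1))\<close>, and the difference is the probability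
  that \<open>\<bar>max(X 1, ..., X (l-1))\<bar> \<le> t < X l\<close> while \<open>X i \<ge> -t\<close> for some \<open>i \<noteq> k\<close>. For \<open>l = 2\<close>
  there is no such \<open>i\<close>, whence equality in distribution; for \<open>l \<ge> 3\<close> the difference is positive
  at some rational \<open>t\<close> as soon as \<open>X l > max \<bar>X i\<bar>\<close> has positive probability. The statements
  about the minimum are those about the maximum of \<open>-X\<close>, which inherits RE.
\<close>

lemma maxX_last:
  "2 \<le> l \<Longrightarrow> maxX X l \<omega> = max (maxX X (l - 1) \<omega>) (X l \<omega>)"
proof -
  assume "2 \<le> l"
  then have "{1..l} = insert l {1..l - 1}" "{1..l - 1} \<noteq> {}" by auto
  then show ?thesis unfolding maxX_def by (simp add: max.commute)
qed

lemma maxX_less_iff: "1 \<le> m \<Longrightarrow> maxX X m \<omega> < c \<longleftrightarrow> (\<forall>i\<in>{1..m}. X i \<omega> < c)"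
  unfolding maxX_def by simp

lemma maxX_le_iff: "1 \<le> m \<Longrightarrow> maxX X m \<omega> \<le> c \<longleftrightarrow> (\<forall>i\<in>{1..m}. X i \<omega> \<le> c)"
  unfolding maxX_def by simp

lemma le_maxX: "i \<in> {1..m} \<Longrightarrow> X i \<omega> \<le> maxX X m \<omega>"
  unfolding maxX_def by simp

lemma maxX_attained:
  assumes "1 \<le> m" shows "\<exists>i\<in>{1..m}. maxX X m \<omega> = X i \<omega>"
proof -
  have "maxX X m \<omega> \<in> (\<lambda>i. X i \<omega>) ` {1..m}"
    unfolding maxX_def using assms by (intro Max_in) auto
  then show ?thesis by auto
qed

lemma abs_maxX_enter_iff:
  assumes "2 \<le> l"
  shows "\<bar>maxX X l \<omega>\<bar> \<le> t \<and> \<not> \<bar>maxX X (l - 1) \<omega>\<bar> \<le> t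
    \<longleftrightarrow> (\<forall>i\<in>{1..l - 1}. X i \<omega> < - t) \<and> \<bar>X l \<omega>\<bar> \<le> t"
proof -
  have l1: "1 \<le> l - 1" using assms by simp
  show ?thesis
    unfolding maxX_last[OF assms] maxX_less_iff[OF l1, symmetric] by (auto simp: max_def)
qed

lemma abs_maxX_exit_iff:
  assumes l: "2 \<le> l" and k: "k \<in> {1..l - 1}" and t: "0 \<le> t"
  shows "\<bar>maxX X (l - 1) \<omega>\<bar> \<le> t \<and> \<not> \<bar>maxX X l \<omega>\<bar> \<le> t
    \<longleftrightarrow> (\<forall>i\<in>{1..l - 1} - {k}. X i \<omega> < - t) \<and> t < X l \<omega> \<and> \<bar>X k \<omega>\<bar> \<le> t
      \<or> \<bar>maxX X (l - 1) \<omega>\<bar> \<le> t \<and> t < X l \<omega> \<and> (\<exists>i\<in>{1..l - 1} - {k}. - t \<le> X i \<omega>)"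
proof -
  have l1: "1 \<le> l - 1" using l by simp
  have "\<bar>maxX X (l - 1) \<omega>\<bar> \<le> t \<and> \<not> \<bar>maxX X l \<omega>\<bar> \<le> t \<longleftrightarrow> \<bar>maxX X (l - 1) \<omega>\<bar> \<le> t \<and> t < X l \<omega>"
    unfolding maxX_last[OF l] by (auto simp: max_def abs_le_iff)
  moreover have "\<bar>maxX X (l - 1) \<omega>\<bar> \<le> t"
    if "\<forall>i\<in>{1..l - 1} - {k}. X i \<omega> < - t" "\<bar>X k \<omega>\<bar> \<le> t"
  proof -
    have "\<forall>i\<in>{1..l - 1}. X i \<omega> \<le> t" using that t by force
    then have "maxX X (l - 1) \<omega> \<le> t" using maxX_le_iff[OF l1, of X \<omega> t] by simp
    moreover have "- t \<le> maxX X (l - 1) \<omega>" using le_maxX[OF k, of X \<omega>] that(2) by linarith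
    ultimately show ?thesis by linarith
  qed
  moreover have "\<bar>X k \<omega>\<bar> \<le> t"
    if "\<bar>maxX X (l - 1) \<omega>\<bar> \<le> t" "\<forall>i\<in>{1..l - 1} - {k}. X i \<omega> < - t"
  proof -
    obtain j where j: "j \<in> {1..l - 1}" "maxX X (l - 1) \<omega> = X j \<omega>"
      using maxX_attained[OF l1, of X \<omega>] by blast
    have "j = k"
    proof (rule ccontr)
      assume "j \<noteq> k"
      then have "X j \<omega> < - t" using that(2) j(1) by blast
      then show False using that(1) j(2) by (simp add: abs_le_iff)
    qed
    then show ?thesis using that(1) j(2) by simp
  qed
  ultimately show ?thesis by (auto simp: not_less) (meson not_less)
qed

lemma abs_maxX_exit_if_abs_le:
  assumes j: "j \<in> {1..l - 1} - {k}" and bounded: "\<forall>i\<in>{1..l - 1}. \<bar>X i \<omega>\<bar> \<le> t"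
  shows "\<bar>maxX X (l - 1) \<omega>\<bar> \<le> t \<and> (\<exists>i\<in>{1..l - 1} - {k}. - t \<le> X i \<omega>)"
proof -
  have "1 \<le> l - 1" using j by simp
  then obtain i where "i \<in> {1..l - 1}" "maxX X (l - 1) \<omega> = X i \<omega>"
    using maxX_attained[of "l - 1" X \<omega>] by blast
  then have "\<bar>maxX X (l - 1) \<omega>\<bar> \<le> t" using bounded by simp
  moreover have "\<bar>X j \<omega>\<bar> \<le> t" using bounded j by blast
  then have "- t \<le> X j \<omega>" by arith
  ultimately show ?thesis using j by blast
qed

lemma minX_eq_uminus_maxX:
  "1 \<le> m \<Longrightarrow> minX X m \<omega> = - maxX (\<lambda>i \<omega>. - X i \<omega>) m \<omega>"
  unfolding minX_def maxX_def by (simp add: image_image)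

lemma borel_measurable_maxX:
  "(\<And>i. i \<in> {1..m} \<Longrightarrow> X i \<in> borel_measurable M) \<Longrightarrow> (\<lambda>\<omega>. maxX X m \<omega>) \<in> borel_measurable M"
  unfolding maxX_def by measurable auto

lemma RE_kl_measure_eq:
  assumes RE: "RE_kl M X k l"
    and mX: "\<And>i. i \<in> {1..l} \<Longrightarrow> X i \<in> borel_measurable M"
    and mQ: "Measurable.pred (PiM {1..l} (\<lambda>_. borel)) Q"
    and Q_local: "\<And>x y. (\<And>i. i \<in> {1..l} \<Longrightarrow> x i = y i) \<Longrightarrow> Q x = Q y"
  shows "measure M {\<omega>\<in>space M. Q (\<lambda>i. X i \<omega>)} =
         measure M {\<omega>\<in>space M. Q (\<lambda>i. if i = k then - X l \<omega> else if i = l then - X k \<omega> else X i \<omega>)}"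
proof -
  let ?N = "PiM {1..l} (\<lambda>_. borel) :: (nat \<Rightarrow> real) measure"
  let ?S = "{x\<in>space ?N. Q x}"
  define Y where "Y i \<omega> = (if i = k then - X l \<omega> else if i = l then - X k \<omega> else X i \<omega>)" for i \<omega>
  have "k \<in> {1..l}" "l \<in> {1..l}" using RE unfolding RE_kl_def by auto
  then have mY: "Y i \<in> borel_measurable M" if "i \<in> {1..l}" for i
    using mX[OF that] mX unfolding Y_def by auto
  have "measure M {\<omega>\<in>space M. Q (\<lambda>i. Z i \<omega>)} = measure (prefix_law M Z l) ?S"
    if mZ: "\<And>i. i \<in> {1..l} \<Longrightarrow> Z i \<in> borel_measurable M" for Z
  proof -
    have f: "(\<lambda>\<omega>. \<lambda>i\<in>{1..l}. Z i \<omega>) \<in> measurable M ?N"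
      using mZ by (intro measurable_restrict) auto
    have "{\<omega>\<in>space M. Q (\<lambda>i. Z i \<omega>)} = (\<lambda>\<omega>. \<lambda>i\<in>{1..l}. Z i \<omega>) -` ?S \<inter> space M"
      using measurable_space[OF f] Q_local[of "\<lambda>i. Z i _" "restrict (\<lambda>i. Z i _) {1..l}"] by auto
    then show ?thesis
      unfolding prefix_law_def using f mQ by (simp add: measure_distr)
  qed
  from this[OF mX] this[OF mY] show ?thesis
    using RE unfolding RE_kl_def Y_def by simp
qed

lemma prefix_law_uminus:
  assumes "\<And>i. i \<in> {1..l} \<Longrightarrow> X i \<in> borel_measurable M"
  shows "prefix_law M (\<lambda>i \<omega>. - X i \<omega>) l
       = distr (prefix_law M X l) (PiM {1..l} (\<lambda>_. borel)) (\<lambda>x. \<lambda>i\<in>{1..l}. - x i)"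
proof -
  have f: "(\<lambda>\<omega>. \<lambda>i\<in>{1..l}. X i \<omega>) \<in> measurable M (PiM {1..l} (\<lambda>_. borel))"
    using assms by (intro measurable_restrict) auto
  have g: "(\<lambda>x. \<lambda>i\<in>{1..l}. - x i) \<in> measurable (PiM {1..l} (\<lambda>_. borel)) (PiM {1..l} (\<lambda>_. borel :: real measure))"
    by measurable
  have "(\<lambda>x. \<lambda>i\<in>{1..l}. - x i) \<circ> (\<lambda>\<omega>. \<lambda>i\<in>{1..l}. X i \<omega>) = (\<lambda>\<omega>. \<lambda>i\<in>{1..l}. - X i \<omega>)"
    by (auto simp: fun_eq_iff)
  then show ?thesis
    unfolding prefix_law_def distr_distr[OF g f] by simp
qed

lemma RE_kl_uminus:
  assumes RE: "RE_kl M X k l" and mX: "\<And>i. i \<in> {1..l} \<Longrightarrow> X i \<in> borel_measurable M"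
  shows "RE_kl M (\<lambda>i \<omega>. - X i \<omega>) k l"
proof -
  let ?N = "PiM {1..l} (\<lambda>_. borel) :: (nat \<Rightarrow> real) measure"
  define Y where "Y = (\<lambda>i \<omega>. if i = k then - X l \<omega> else if i = l then - X k \<omega> else X i \<omega>)"
  have "k \<in> {1..l}" "l \<in> {1..l}" using RE unfolding RE_kl_def by auto
  then have mY: "Y i \<in> borel_measurable M" if "i \<in> {1..l}" for i
    using mX[OF that] mX unfolding Y_def by auto
  have "prefix_law M (\<lambda>i \<omega>. - X i \<omega>) l = distr (prefix_law M X l) ?N (\<lambda>x. \<lambda>i\<in>{1..l}. - x i)"
    by (rule prefix_law_uminus[OF mX])
  also have "\<dots> = distr (prefix_law M Y l) ?N (\<lambda>x. \<lambda>i\<in>{1..l}. - x i)"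
    using RE unfolding RE_kl_def Y_def by simp
  also have "\<dots> = prefix_law M (\<lambda>i \<omega>. - Y i \<omega>) l"
    by (rule prefix_law_uminus[OF mY, symmetric])
  also have "(\<lambda>i \<omega>. - Y i \<omega>)
      = (\<lambda>i \<omega>. if i = k then - (- X l \<omega>) else if i = l then - (- X k \<omega>) else - X i \<omega>)"
    unfolding Y_def by (simp add: fun_eq_iff)
  finally show ?thesis
    using RE unfolding RE_kl_def by simp
qed

lemma RE_uminus:
  "RE M X l \<Longrightarrow> (\<And>i. i \<in> {1..l} \<Longrightarrow> X i \<in> borel_measurable M) \<Longrightarrow> RE M (\<lambda>i \<omega>. - X i \<omega>) l"
  unfolding RE_def using RE_kl_uminus by blast

lemma measure_abs_maxX_enter_eq:
  assumes RE: "RE_kl M X k l" and l: "2 \<le> l"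
    and mX: "\<And>i. i \<in> {1..l} \<Longrightarrow> X i \<in> borel_measurable M"
  shows "measure M {\<omega>\<in>space M. \<bar>maxX X l \<omega>\<bar> \<le> t \<and> \<not> \<bar>maxX X (l - 1) \<omega>\<bar> \<le> t}
       = measure M {\<omega>\<in>space M. (\<forall>i\<in>{1..l - 1} - {k}. X i \<omega> < - t) \<and> t < X l \<omega> \<and> \<bar>X k \<omega>\<bar> \<le> t}"
proof -
  let ?Q = "\<lambda>x. (\<forall>i\<in>{1..l - 1}. x i < - t) \<and> \<bar>x l\<bar> \<le> t"
  have k: "k \<in> {1..l - 1}" using RE unfolding RE_kl_def by auto
  have Q_pred: "Measurable.pred (PiM {1..l} (\<lambda>_. borel)) ?Q"
    by measurable (use l in auto)
  have Q_local: "?Q x = ?Q y" if "\<And>i. i \<in> {1..l} \<Longrightarrow> x i = y i" for x y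
  proof -
    have "\<forall>i\<in>{1..l - 1}. x i = y i" "x l = y l" using that l by auto
    then show ?thesis by simp
  qed
  have "{\<omega>\<in>space M. \<bar>maxX X l \<omega>\<bar> \<le> t \<and> \<not> \<bar>maxX X (l - 1) \<omega>\<bar> \<le> t} = {\<omega>\<in>space M. ?Q (\<lambda>i. X i \<omega>)}"
    by (simp only: abs_maxX_enter_iff[OF l])
  moreover have "{\<omega>\<in>space M. ?Q (\<lambda>i. if i = k then - X l \<omega> else if i = l then - X k \<omega> else X i \<omega>)}
      = {\<omega>\<in>space M. (\<forall>i\<in>{1..l - 1} - {k}. X i \<omega> < - t) \<and> t < X l \<omega> \<and> \<bar>X k \<omega>\<bar> \<le> t}"
  proof -
    have "(\<forall>i\<in>{1..l - 1}. (if i = k then - X l \<omega> else if i = l then - X k \<omega> else X i \<omega>) < - t)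
        \<longleftrightarrow> t < X l \<omega> \<and> (\<forall>i\<in>{1..l - 1} - {k}. X i \<omega> < - t)" for \<omega>
    proof -
      have "i \<noteq> l" if "i \<in> {1..l - 1}" for i using that by auto
      then have "(\<forall>i\<in>{1..l - 1} - {k}. (if i = k then - X l \<omega> else if i = l then - X k \<omega> else X i \<omega>) < - t)
          \<longleftrightarrow> (\<forall>i\<in>{1..l - 1} - {k}. X i \<omega> < - t)"
        by (intro ball_cong) auto
      moreover have "(\<forall>i\<in>{1..l - 1}. P i) \<longleftrightarrow> P k \<and> (\<forall>i\<in>{1..l - 1} - {k}. P i)" for P
        using k by blast
      ultimately show ?thesis by simp
    qed
    moreover have "l \<noteq> k" using k by auto
    ultimately show ?thesis by auto
  qed
  ultimately show ?thesis
    using RE_kl_measure_eq[OF RE mX Q_pred Q_local] by (simp only:)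
qed

lemma cdf_abs_maxX_gap:
  assumes "prob_space M" and RE: "RE_kl M X k l" and l: "2 \<le> l"
    and mX: "\<And>i. i \<in> {1..l} \<Longrightarrow> X i \<in> borel_measurable M" and t: "0 \<le> t"
  shows "cdf_rv M (\<lambda>\<omega>. \<bar>maxX X (l - 1) \<omega>\<bar>) t - cdf_rv M (\<lambda>\<omega>. \<bar>maxX X l \<omega>\<bar>) t
       = measure M {\<omega>\<in>space M. \<bar>maxX X (l - 1) \<omega>\<bar> \<le> t \<and> t < X l \<omega> \<and> (\<exists>i\<in>{1..l - 1} - {k}. - t \<le> X i \<omega>)}"
    (is "_ = measure M ?E")
proof -
  interpret prob_space M by fact
  have k: "k \<in> {1..l - 1}" using RE unfolding RE_kl_def by auto
  define A where "A = {\<omega>\<in>space M. \<bar>maxX X l \<omega>\<bar> \<le> t}"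
  define B where "B = {\<omega>\<in>space M. \<bar>maxX X (l - 1) \<omega>\<bar> \<le> t}"
  define G where "G = {\<omega>\<in>space M. (\<forall>i\<in>{1..l - 1} - {k}. X i \<omega> < - t) \<and> t < X l \<omega> \<and> \<bar>X k \<omega>\<bar> \<le> t}"
  have [measurable]: "X l \<in> borel_measurable M" "X k \<in> borel_measurable M"
    "(\<lambda>\<omega>. maxX X l \<omega>) \<in> borel_measurable M" "(\<lambda>\<omega>. maxX X (l - 1) \<omega>) \<in> borel_measurable M"
    using k l by (auto intro!: mX borel_measurable_maxX)
  have [measurable]: "Measurable.pred M (\<lambda>\<omega>. \<exists>i\<in>{1..l - 1} - {k}. - t \<le> X i \<omega>)"
    using mX by measurable auto
  have [measurable]: "Measurable.pred M (\<lambda>\<omega>. \<forall>i\<in>{1..l - 1} - {k}. X i \<omega> < - t)"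
    using mX by measurable auto
  have sets: "A \<in> sets M" "B \<in> sets M" "G \<in> sets M" "?E \<in> sets M"
    unfolding A_def B_def G_def by measurable
  have "A - B = {\<omega>\<in>space M. \<bar>maxX X l \<omega>\<bar> \<le> t \<and> \<not> \<bar>maxX X (l - 1) \<omega>\<bar> \<le> t}"
    unfolding A_def B_def by auto
  then have enter: "measure M (A - B) = measure M G"
    unfolding G_def by (simp only: measure_abs_maxX_enter_eq[OF RE l mX])
  have "B - A = G \<union> ?E"
  proof (intro set_eqI)
    show "\<omega> \<in> B - A \<longleftrightarrow> \<omega> \<in> G \<union> ?E" for \<omega>
      using abs_maxX_exit_iff[OF l k t, of X \<omega>] unfolding A_def B_def G_def by blast
  qed
  moreover have "G \<inter> ?E = {}"
    unfolding G_def by (auto simp: not_less[symmetric])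
  ultimately have exit: "measure M (B - A) = measure M G + measure M ?E"
    using sets by (simp add: finite_measure_Union)
  have "measure M B - measure M A = measure M (B - A) - measure M (A - B)"
    using sets by (simp add: finite_measure_Diff' Int_commute)
  then show ?thesis
    unfolding cdf_rv_def A_def[symmetric] B_def[symmetric] enter exit by simp
qed

lemma cdf_rv_abs_neg:
  assumes "t < 0" shows "cdf_rv M (\<lambda>\<omega>. \<bar>f \<omega>\<bar>) t = 0"
proof -
  have "\<not> \<bar>f \<omega>\<bar> \<le> t" for \<omega> using assms by arith
  then show ?thesis unfolding cdf_rv_def by simp
qed

lemma cdf_abs_maxX_strict_mono:
  assumes "prob_space M" and RE: "RE_kl M X k l" and l: "3 \<le> l"
    and mX: "\<And>i. i \<in> {1..l} \<Longrightarrow> X i \<in> borel_measurable M"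
    and pos: "0 < measure M {\<omega>\<in>space M. Max ((\<lambda>i. \<bar>X i \<omega>\<bar>) ` {1..l - 1}) \<le> t \<and> t < X l \<omega>}"
  shows "cdf_rv M (\<lambda>\<omega>. \<bar>maxX X l \<omega>\<bar>) t < cdf_rv M (\<lambda>\<omega>. \<bar>maxX X (l - 1) \<omega>\<bar>) t"
proof -
  interpret prob_space M by fact
  let ?H = "{\<omega>\<in>space M. Max ((\<lambda>i. \<bar>X i \<omega>\<bar>) ` {1..l - 1}) \<le> t \<and> t < X l \<omega>}"
  let ?E = "{\<omega>\<in>space M. \<bar>maxX X (l - 1) \<omega>\<bar> \<le> t \<and> t < X l \<omega> \<and> (\<exists>i\<in>{1..l - 1} - {k}. - t \<le> X i \<omega>)}"
  obtain j where j: "j \<in> {1..l - 1} - {k}"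
    using l by (cases "k = 1") (auto intro: that[of 1] that[of 2])
  have bounded: "\<forall>i\<in>{1..l - 1}. \<bar>X i \<omega>\<bar> \<le> t" if "\<omega> \<in> ?H" for \<omega>
    using that l by simp
  have t: "0 \<le> t"
  proof -
    have "?H \<noteq> {}" using pos by (metis less_irrefl measure_empty)
    then obtain \<omega> where "\<omega> \<in> ?H" by blast
    then have "\<bar>X j \<omega>\<bar> \<le> t" using bounded j by blast
    then show ?thesis by arith
  qed
  have [measurable]: "X l \<in> borel_measurable M" "(\<lambda>\<omega>. maxX X (l - 1) \<omega>) \<in> borel_measurable M"
    using l by (auto intro!: mX borel_measurable_maxX)
  have [measurable]: "Measurable.pred M (\<lambda>\<omega>. \<exists>i\<in>{1..l - 1} - {k}. - t \<le> X i \<omega>)"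
    using mX by measurable auto
  have "?H \<subseteq> ?E"
  proof
    fix \<omega> assume H: "\<omega> \<in> ?H"
    then show "\<omega> \<in> ?E" using abs_maxX_exit_if_abs_le[where X = X and \<omega> = \<omega>, OF j bounded[OF H]] by blast
  qed
  then have "measure M ?H \<le> measure M ?E"
    by (intro finite_measure_mono) measurable
  moreover have "2 \<le> l" using l by simp
  then have "cdf_rv M (\<lambda>\<omega>. \<bar>maxX X (l - 1) \<omega>\<bar>) t - cdf_rv M (\<lambda>\<omega>. \<bar>maxX X l \<omega>\<bar>) t = measure M ?E"
    by (rule cdf_abs_maxX_gap[OF assms(1) RE _ mX t])
  ultimately show ?thesis using pos by linarith
qed

lemma eq_dist_if_cdf_eq:
  assumes "prob_space M" and f: "f \<in> borel_measurable M" and g: "g \<in> borel_measurable M"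
    and "\<And>x. cdf_rv M f x = cdf_rv M g x"
  shows "eq_dist M f g"
proof -
  interpret prob_space M by fact
  have "cdf (distr M borel h) x = cdf_rv M h x" if "h \<in> borel_measurable M" for h x
  proof -
    have "h -` {..x} \<inter> space M = {\<omega>\<in>space M. h \<omega> \<le> x}" by auto
    then show ?thesis
      unfolding cdf_def cdf_rv_def using that by (simp add: measure_distr)
  qed
  then show ?thesis
    unfolding eq_dist_def using assms by (intro cdf_unique) auto
qed

lemma (in prob_space) prob_less_pos_obtain_threshold:
  fixes f g :: "'a \<Rightarrow> real"
  assumes [measurable]: "f \<in> borel_measurable M" "g \<in> borel_measurable M"
    and pos: "0 < prob {\<omega>\<in>space M. f \<omega> < g \<omega>}"
  obtains q where "0 < prob {\<omega>\<in>space M. f \<omega> \<le> q \<and> q < g \<omega>}"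
proof (rule ccontr)
  assume "\<not> thesis"
  have "prob {\<omega>\<in>space M. f \<omega> \<le> q \<and> q < g \<omega>} = 0" for q
  proof -
    have "\<not> 0 < prob {\<omega>\<in>space M. f \<omega> \<le> q \<and> q < g \<omega>}"
      using that \<open>\<not> thesis\<close> by blast
    then show ?thesis using measure_nonneg[of M "{\<omega>\<in>space M. f \<omega> \<le> q \<and> q < g \<omega>}"] by linarith
  qed
  then have null: "{\<omega>\<in>space M. f \<omega> \<le> q \<and> q < g \<omega>} \<in> null_sets M" for q
    by (simp add: emeasure_eq_measure null_sets_def)
  have "(\<Union>q\<in>\<rat>. {\<omega>\<in>space M. f \<omega> \<le> q \<and> q < g \<omega>}) \<in> null_sets M"
    by (rule null_sets_UN') (auto simp: countable_rat null)
  moreover have "{\<omega>\<in>space M. f \<omega> < g \<omega>} \<in> sets M" by measurable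
  moreover have "{\<omega>\<in>space M. f \<omega> < g \<omega>} \<subseteq> (\<Union>q\<in>\<rat>. {\<omega>\<in>space M. f \<omega> \<le> q \<and> q < g \<omega>})"
  proof
    fix \<omega> assume "\<omega> \<in> {\<omega>\<in>space M. f \<omega> < g \<omega>}"
    moreover then obtain q where "q \<in> \<rat>" "f \<omega> < q" "q < g \<omega>"
      using Rats_dense_in_real by blast
    ultimately show "\<omega> \<in> (\<Union>q\<in>\<rat>. {\<omega>\<in>space M. f \<omega> \<le> q \<and> q < g \<omega>})"
      by (auto intro!: bexI[of _ q])
  qed
  ultimately have "{\<omega>\<in>space M. f \<omega> < g \<omega>} \<in> null_sets M"
    by (rule null_sets_subset)
  then show False using pos by (simp add: emeasure_eq_measure null_sets_def)
qed

lemma eq_dist_abs_X1_abs_maxX2: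
  assumes "prob_space M" and RE: "RE_kl M X k 2"
    and mX: "\<And>i. i \<in> {1..2} \<Longrightarrow> X i \<in> borel_measurable M"
  shows "eq_dist M (\<lambda>\<omega>. \<bar>X 1 \<omega>\<bar>) (\<lambda>\<omega>. \<bar>maxX X 2 \<omega>\<bar>)"
proof (rule eq_dist_if_cdf_eq[OF assms(1)])
  show "cdf_rv M (\<lambda>\<omega>. \<bar>X 1 \<omega>\<bar>) t = cdf_rv M (\<lambda>\<omega>. \<bar>maxX X 2 \<omega>\<bar>) t" for t
  proof (cases "0 \<le> t")
    case True
    have "k = 1" using RE unfolding RE_kl_def by simp
    then show ?thesis
      using cdf_abs_maxX_gap[OF assms(1) RE order.refl mX True] by (simp add: maxX_def)
  qed (simp add: cdf_rv_abs_neg)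
qed (use mX in \<open>auto intro!: borel_measurable_abs borel_measurable_maxX\<close>)

lemma st_le_abs_maxX:
  assumes "prob_space M" and RE: "RE_kl M X k l" and l: "2 \<le> l"
    and mX: "\<And>i. i \<in> {1..l} \<Longrightarrow> X i \<in> borel_measurable M"
  shows "st_le M (\<lambda>\<omega>. \<bar>maxX X (l - 1) \<omega>\<bar>) (\<lambda>\<omega>. \<bar>maxX X l \<omega>\<bar>)"
  unfolding st_le_def
proof
  show "cdf_rv M (\<lambda>\<omega>. \<bar>maxX X l \<omega>\<bar>) t \<le> cdf_rv M (\<lambda>\<omega>. \<bar>maxX X (l - 1) \<omega>\<bar>) t" for t
  proof (cases "0 \<le> t")
    case True
    have "0 \<le> cdf_rv M (\<lambda>\<omega>. \<bar>maxX X (l - 1) \<omega>\<bar>) t - cdf_rv M (\<lambda>\<omega>. \<bar>maxX X l \<omega>\<bar>) t"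
      using mX by (subst cdf_abs_maxX_gap[OF assms(1) RE l _ True]) simp_all
    then show ?thesis by simp
  qed (simp add: cdf_rv_abs_neg)
qed

lemma st_less_abs_maxX:
  assumes "prob_space M" and RE: "RE_kl M X k l" and l: "3 \<le> l"
    and mX: "\<And>i. i \<in> {1..l} \<Longrightarrow> X i \<in> borel_measurable M"
    and pos: "0 < measure M {\<omega>\<in>space M. X l \<omega> > Max ((\<lambda>i. \<bar>X i \<omega>\<bar>) ` {1..l - 1})}"
  shows "st_less M (\<lambda>\<omega>. \<bar>maxX X (l - 1) \<omega>\<bar>) (\<lambda>\<omega>. \<bar>maxX X l \<omega>\<bar>)"
proof -
  interpret prob_space M by fact
  have "(\<lambda>\<omega>. Max ((\<lambda>i. \<bar>X i \<omega>\<bar>) ` {1..l - 1})) \<in> borel_measurable M"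
    using mX by (intro borel_measurable_Max) auto
  moreover have "X l \<in> borel_measurable M"
    using mX l by simp
  ultimately obtain q
    where "0 < measure M {\<omega>\<in>space M. Max ((\<lambda>i. \<bar>X i \<omega>\<bar>) ` {1..l - 1}) \<le> q \<and> q < X l \<omega>}"
    using pos by (rule prob_less_pos_obtain_threshold)
  then have "cdf_rv M (\<lambda>\<omega>. \<bar>maxX X l \<omega>\<bar>) q < cdf_rv M (\<lambda>\<omega>. \<bar>maxX X (l - 1) \<omega>\<bar>) q"
    using mX by (intro cdf_abs_maxX_strict_mono[OF assms(1) RE l])
  moreover have "2 \<le> l" using l by simp
  ultimately show ?thesis
    unfolding st_less_def using st_le_abs_maxX[OF assms(1) RE _ mX] by auto
qed

lemma SIAMX_if_RE:
  assumes "prob_space M" and "n \<ge> 2"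
    and mX: "\<And>i. 1 \<le> i \<Longrightarrow> enat i \<le> n \<Longrightarrow> X i \<in> borel_measurable M"
    and RE: "\<And>l. 2 \<le> l \<Longrightarrow> enat l \<le> n \<Longrightarrow> RE M X l"
  shows "SIAMX M X n"
    and "(\<forall>l. 3 \<le> l \<and> enat l \<le> n \<longrightarrow>
           measure M {\<omega> \<in> space M. X l \<omega> > Max ((\<lambda>i. \<bar>X i \<omega>\<bar>) ` {1..l - 1})} > 0)
         \<Longrightarrow> SSIAMX M X n"
proof -
  have mX_prefix: "\<And>i. i \<in> {1..l} \<Longrightarrow> X i \<in> borel_measurable M" if "enat l \<le> n" for l
    using mX that by (meson atLeastAtMost_iff enat_ord_simps(1) order.trans)
  have RE_kl: "\<exists>k. RE_kl M X k l" if "2 \<le> l" "enat l \<le> n" for l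
    using RE[OF that] unfolding RE_def by blast
  have n2: "enat 2 \<le> n" using \<open>n \<ge> 2\<close> by (simp add: numeral_eq_enat)
  obtain k where "RE_kl M X k 2" using RE_kl[OF order.refl n2] by blast
  then have eq: "eq_dist M (\<lambda>\<omega>. \<bar>X 1 \<omega>\<bar>) (\<lambda>\<omega>. \<bar>maxX X 2 \<omega>\<bar>)"
    using mX_prefix[OF n2] by (intro eq_dist_abs_X1_abs_maxX2[OF assms(1)])
  have "st_le M (\<lambda>\<omega>. \<bar>maxX X (l - 1) \<omega>\<bar>) (\<lambda>\<omega>. \<bar>maxX X l \<omega>\<bar>)"
    if l: "3 \<le> l" "enat l \<le> n" for l
  proof -
    obtain k where "RE_kl M X k l" using RE_kl[of l] l by force
    then show ?thesis using l mX_prefix[OF l(2)] by (intro st_le_abs_maxX[OF assms(1)]) auto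
  qed
  then show "SIAMX M X n" unfolding SIAMX_def using eq by blast
  assume pos: "\<forall>l. 3 \<le> l \<and> enat l \<le> n \<longrightarrow>
    measure M {\<omega> \<in> space M. X l \<omega> > Max ((\<lambda>i. \<bar>X i \<omega>\<bar>) ` {1..l - 1})} > 0"
  have "st_less M (\<lambda>\<omega>. \<bar>maxX X (l - 1) \<omega>\<bar>) (\<lambda>\<omega>. \<bar>maxX X l \<omega>\<bar>)"
    if l: "3 \<le> l" "enat l \<le> n" for l
  proof -
    obtain k where "RE_kl M X k l" using RE_kl[of l] l by force
    then show ?thesis using l pos mX_prefix[OF l(2)] by (intro st_less_abs_maxX[OF assms(1)]) auto
  qed
  then show "SSIAMX M X n" unfolding SSIAMX_def using eq by blast
qed

lemma SIAMN_eq_SIAMX_uminus: "SIAMN M X n = SIAMX M (\<lambda>i \<omega>. - X i \<omega>) n"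
  unfolding SIAMN_def SIAMX_def by (auto simp add: minX_eq_uminus_maxX)

lemma SSIAMN_eq_SSIAMX_uminus: "SSIAMN M X n = SSIAMX M (\<lambda>i \<omega>. - X i \<omega>) n"
  unfolding SSIAMN_def SSIAMX_def by (auto simp add: minX_eq_uminus_maxX)

theorem theorem3p6:
  fixes M :: "'a measure" and X :: "nat \<Rightarrow> 'a \<Rightarrow> real" and n :: enat
  assumes "prob_space M"
    and "n \<ge> 2"
    and "\<And>i. 1 \<le> i \<Longrightarrow> enat i \<le> n \<Longrightarrow> X i \<in> borel_measurable M"
    and "\<And>l. 2 \<le> l \<Longrightarrow> enat l \<le> n \<Longrightarrow> RE M X l"
  shows "SIAMX M X n \<and> SIAMN M X n
    \<and> ((\<forall>l. 3 \<le> l \<and> enat l \<le> n \<longrightarrow>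
          measure M {\<omega> \<in> space M. X l \<omega> > Max ((\<lambda>i. \<bar>X i \<omega>\<bar>) ` {1..l - 1})} > 0)
        \<longrightarrow> SSIAMX M X n)
    \<and> ((\<forall>l. 3 \<le> l \<and> enat l \<le> n \<longrightarrow>
          measure M {\<omega> \<in> space M. X l \<omega> < - Max ((\<lambda>i. \<bar>X i \<omega>\<bar>) ` {1..l - 1})} > 0)
        \<longrightarrow> SSIAMN M X n)"
proof -
  let ?Y = "\<lambda>i \<omega>. - X i \<omega>"
  have mY: "?Y i \<in> borel_measurable M" if "1 \<le> i" "enat i \<le> n" for i
    using assms(3)[OF that] by simp
  have RE_Y: "RE M ?Y l" if "2 \<le> l" "enat l \<le> n" for l
    using that by (intro RE_uminus assms(4)) (auto intro!: assms(3) order.trans[OF _ that(2)])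
  have "X l \<omega> < - Max ((\<lambda>i. \<bar>X i \<omega>\<bar>) ` {1..l - 1}) \<longleftrightarrow> ?Y l \<omega> > Max ((\<lambda>i. \<bar>?Y i \<omega>\<bar>) ` {1..l - 1})"
    for l \<omega> by auto
  then show ?thesis
    using SIAMX_if_RE[OF assms] SIAMX_if_RE[OF assms(1,2) mY RE_Y]
    unfolding SIAMN_eq_SIAMX_uminus SSIAMN_eq_SSIAMX_uminus by simp
qed

end
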